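(* Let $\operatorname{sinc}(0)=1$ and $\operatorname{sinc}(t)=\frac{\sin(\pi t)}{\pi t}$ for $t\neq0$, and for a signal $x:\mathbb{R}\to\mathbb{C}$ define the Whittaker cylinder interpolation \[ Fx(t,\varphi)=\sum_{\tau\in\varphi} x(\tau)\operatorname{sinc}(t-\tau):=\lim_{N\to\infty}\sum_{\tau\in\varphi\cap[-N,N]} x(\tau)\operatorname{sinc}(t-\tau). \] Let $a=b+n$ with $n\in\mathbb{Z}$ and $b\in(-\tfrac12,\tfrac12)$, and let $x(t)=\exp(2\pi i\,a t)$. Then for all $t\in\mathbb{R}$ and $\varphi\in\mathbb{T}$, \[ Fx(t,\varphi)=\exp\!\big(2\pi i\,(b\,t+n\,\rho(\varphi))\big). \] Consequently, for any reals $v,\alpha$, the signal $z(t)=Fx(v t, c(\alpha t))$ satisfies $z(t)=\exp\!\big(2\pi i\,(b v+n\alpha)\,t\big)$ for all $t\in\mathbb{R}$.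
   Context: $\mathbb{T}=\mathbb{R}/\mathbb{Z}$; $c:\mathbb{R}\to\mathbb{T}$, $c(p)=p+\mathbb{Z}$; an element $\varphi\in\mathbb{T}$ is regarded as the set of reals $\tau$ with $c(\tau)=\varphi$; $\rho:\mathbb{T}\to[0,1)$ picks the unique representative of $\varphi$ in $[0,1)$. *)

theory Defs
  imports "HOL-Analysis.Analysis"
begin

text \<open>The circle T = R/Z: an element is a coset of Z in R, i.e. a set of reals.\<close>
definition cyl :: "real \<Rightarrow> real set" where
  "cyl p = {\<tau>. \<tau> - p \<in> \<int>}"

definition torus :: "real set set" where
  "torus = range cyl"

definition rho :: "real set \<Rightarrow> real" where
  "rho \<phi> = (THE r. r \<in> \<phi> \<and> 0 \<le> r \<and> r < 1)"

definition sinc :: "real \<Rightarrow> real" where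
  "sinc t = (if t = 0 then 1 else sin (pi * t) / (pi * t))"

definition whittaker_partial :: "(real \<Rightarrow> complex) \<Rightarrow> real \<Rightarrow> real set \<Rightarrow> real \<Rightarrow> complex" where
  "whittaker_partial x t \<phi> N = (\<Sum>\<tau>\<in>\<phi> \<inter> {-N..N}. x \<tau> * complex_of_real (sinc (t - \<tau>)))"

definition whittaker :: "(real \<Rightarrow> complex) \<Rightarrow> real \<Rightarrow> real set \<Rightarrow> complex" where
  "whittaker x t \<phi> = Lim at_top (whittaker_partial x t \<phi>)"

end

theory Submission
  imports Defs "HOL-Real_Asymp.Real_Asymp" "HOL-Probability.Characteristic_Functions"
begin

(* Write e(y) = exp(2 pi i y).  On the coset r + Z the samples of x(t) = e(a t),
   a = b + n, are x(r + k) = e(a r) e(b k), so the cylinder sum reduces to the Whittaker series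
   sum_k e(b k) sinc(s - k) with s = t - r.  For |b| < 1/2 this series equals e(b s) along
   symmetric partial sums, which we prove in three stages:

   1. Partial fractions.  The digamma reflection formula gives
      pi cot(pi s) = lim_K sum_{|k|<=K} 1/(s - k), hence pi/sin(pi s) = lim_K sum (-1)^k/(s - k);
      the latter is the identity sum_k sinc(s - k) = 1, i.e. the case b = 0.
   2. Integration by parts in the frequency.  h_K(z) = sum_{|k|<=K} sinc(s - k) e(z (k - s)) has
      derivative c (-1)^K e(-s z) cos((2K+1) pi z) / cos(pi z), an oscillating kernel; since
      cos(pi z) stays away from 0 between 0 and b, integrating it shows h_K(b) - h_K(0) = O(1/K).
   3. Cylinder sums.  The set of k with r + k in [-N,N] exceeds a symmetric window by at most two
      indices whose terms tend to 0; with rho(c(p)) = p - floor p and the integer periodicity of e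
      both claims of the theorem follow. *)

definition wave :: "real \<Rightarrow> complex" where
  "wave y = exp (2 * of_real pi * \<i> * of_real y)"

lemma wave_add: "wave (x + y) = wave x * wave y"
  by (simp add: wave_def distrib_left exp_add)

lemma wave_int: "wave (of_int j) = 1"
proof -
  have "2 * of_real pi * \<i> * of_real (of_int j) = \<i> * (of_int j * (of_real pi * 2))" by simp
  thus ?thesis unfolding wave_def by (simp only: exp_2pi_1_int)
qed

lemma norm_wave: "norm (wave y) = 1"
proof -
  have "2 * of_real pi * \<i> * of_real y = \<i> * of_real (2 * pi * y)" by simp
  thus ?thesis unfolding wave_def by (simp only: norm_exp_i_times)
qed

text \<open>Reflection formula for the digamma function, obtained by differentiating
  Gamma(s) Gamma(1 - s) sin(pi s) = pi; it yields the cotangent as a difference of digamma values.\<close>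

lemma digamma_reflection:
  fixes s :: real assumes s: "s \<notin> \<int>"
  shows "Digamma (1 - s) - Digamma s = pi * cos (pi * s) / sin (pi * s)"
proof -
  define f where "f x = Gamma x * Gamma (1 - x) * sin (pi * x)" for x :: real
  have sin0: "sin (pi * x) \<noteq> 0" if "x \<notin> \<int>" for x :: real
    using that by (auto simp: sin_zero_iff_int2 mult.commute[of pi])
  have fpi: "f x = pi" if "x \<notin> \<int>" for x :: real
  proof -
    have "Gamma (complex_of_real x) * Gamma (1 - complex_of_real x) = of_real pi / sin (of_real pi * of_real x)"
      by (rule Gamma_reflection_complex)
    hence "complex_of_real (Gamma x * Gamma (1 - x)) = of_real (pi / sin (pi * x))"
      by (simp flip: Gamma_complex_of_real sin_of_real)
    hence "Gamma x * Gamma (1 - x) = pi / sin (pi * x)" using of_real_eq_iff by blast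
    thus ?thesis using sin0[OF that] by (simp add: f_def)
  qed
  have "eventually (\<lambda>x. x \<in> UNIV - \<int>) (nhds s)"
    using s by (intro eventually_nhds_in_open) (auto simp: open_Diff)
  hence f_const: "eventually (\<lambda>x. f x = pi) (nhds s)" by eventually_elim (auto intro: fpi)
  have f_deriv: "(f has_field_derivative 0) (at s)"
    by (subst DERIV_cong_ev[OF refl f_const refl]) (rule DERIV_const)
  have s1: "s \<notin> \<int>\<^sub>\<le>\<^sub>0" using s nonpos_Ints_subset_Ints by blast
  have s2: "1 - s \<notin> \<int>\<^sub>\<le>\<^sub>0"
  proof
    assume "1 - s \<in> \<int>\<^sub>\<le>\<^sub>0"
    hence "1 - (1 - s) \<in> \<int>" using nonpos_Ints_subset_Ints by (intro Ints_diff) auto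
    thus False using s by simp
  qed
  have g1: "(Gamma has_field_derivative Gamma s * Digamma s) (at s)"
    using s1 by (rule has_field_derivative_Gamma)
  have g2: "((\<lambda>x. Gamma (1 - x)) has_field_derivative (Gamma (1 - s) * Digamma (1 - s)) * (-1)) (at s)"
  proof -
    have "(Gamma has_field_derivative Gamma (1 - s) * Digamma (1 - s)) (at (1 - s))"
      using s2 by (rule has_field_derivative_Gamma)
    moreover have "((\<lambda>x. 1 - x) has_field_derivative (-1)) (at s)"
      by (auto intro!: derivative_eq_intros)
    ultimately show ?thesis by (rule DERIV_chain2)
  qed
  have g3: "((\<lambda>x. sin (pi * x)) has_field_derivative cos (pi * s) * pi) (at s)"
    by (auto intro!: derivative_eq_intros)
  note product_deriv = DERIV_mult[OF DERIV_mult[OF g1 g2] g3]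
  from DERIV_unique[OF product_deriv f_deriv[unfolded f_def]]
  have "Gamma s * Gamma (1 - s) * ((Digamma s - Digamma (1 - s)) * sin (pi * s) + pi * cos (pi * s)) = 0"
    by (simp add: algebra_simps)
  moreover have "Gamma s \<noteq> 0" "Gamma (1 - s) \<noteq> 0" using s1 s2 by (auto simp: Gamma_eq_zero_iff)
  ultimately have "(Digamma s - Digamma (1 - s)) * sin (pi * s) + pi * cos (pi * s) = 0" by simp
  thus ?thesis using sin0[OF s] by (simp add: field_simps)
qed

lemma sum_symmetric_Suc:
  "(\<Sum>k\<in>{-int (Suc K)..int (Suc K)}. f k) = (\<Sum>k\<in>{-int K..int K}. f k) + f (int K + 1) + f (- int K - 1)"
proof -
  have "{-int (Suc K)..int (Suc K)} = insert (int K + 1) (insert (-int K - 1) {-int K..int K})" by auto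
  thus ?thesis by (simp add: algebra_simps)
qed

text \<open>Symmetric partial fractions of the cotangent written as the difference of the two
  harmonic-type sums whose limits define Digamma(s) and Digamma(1 - s).\<close>

lemma cot_partial_sum_split:
  fixes s :: real
  shows "(\<Sum>k\<in>{-int K..int K}. inverse (s - of_int k)) =
         (\<Sum>n<Suc K. inverse (s + of_nat n)) - (\<Sum>n<K. inverse ((1 - s) + of_nat n))"
proof (induction K)
  case 0
  then show ?case by simp
next
  case (Suc K)
  have "s - of_int (int K + 1) = - ((1 - s) + of_nat K)" by simp
  hence "inverse (s - of_int (int K + 1)) = - inverse ((1 - s) + of_nat K)"
    by (simp only: inverse_minus_eq)
  moreover have "inverse (s - of_int (- int K - 1)) = inverse (s + of_nat (Suc K))"
    by (simp add: algebra_simps)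
  ultimately show ?case unfolding sum_symmetric_Suc Suc.IH by simp
qed

lemma cot_partial_fractions:
  fixes s :: real assumes s: "s \<notin> \<int>"
  shows "(\<lambda>K. \<Sum>k\<in>{-int K..int K}. inverse (s - of_int k)) \<longlonglongrightarrow> pi * cos (pi * s) / sin (pi * s)"
proof -
  have s0: "s \<noteq> 0" and s1: "1 - s \<noteq> 0" using s by auto
  define X where "X K = ln (real K) - (\<Sum>n<K. inverse (s + of_nat n))" for K
  define Y where "Y K = ln (real K) - (\<Sum>n<K. inverse ((1 - s) + of_nat n))" for K
  have X: "(\<lambda>K. X (Suc K)) \<longlonglongrightarrow> Digamma s"
    using LIMSEQ_Suc[OF Digamma_LIMSEQ[OF s0]] unfolding X_def by simp
  have Y: "Y \<longlonglongrightarrow> Digamma (1 - s)"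
    unfolding Y_def using Digamma_LIMSEQ[OF s1] by simp
  have ln_step: "(\<lambda>K::nat. ln (real (Suc K)) - ln (real K)) \<longlonglongrightarrow> 0"
    by real_asymp
  have "(\<lambda>K. Y K - X (Suc K) + (ln (real (Suc K)) - ln (real K))) \<longlonglongrightarrow> Digamma (1 - s) - Digamma s + 0"
    by (intro tendsto_intros X Y ln_step)
  also have "(\<lambda>K. Y K - X (Suc K) + (ln (real (Suc K)) - ln (real K))) =
      (\<lambda>K. \<Sum>k\<in>{-int K..int K}. inverse (s - of_int k))"
    by (rule ext) (simp add: cot_partial_sum_split X_def Y_def)
  finally show ?thesis using digamma_reflection[OF s] by simp
qed

definition parity_sign :: "int \<Rightarrow> real" where
  "parity_sign k = (if even k then 1 else -1)"

lemma abs_parity_sign [simp]: "\<bar>parity_sign k\<bar> = 1"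
  by (simp add: parity_sign_def)

lemma sin_pi_shift_int: "sin (pi * (s - of_int k)) = parity_sign k * sin (pi * s)"
proof -
  have "sin (pi * (s - of_int k)) = sin (pi * s) * cos (pi * of_int k) - cos (pi * s) * sin (pi * of_int k)"
    by (simp add: right_diff_distrib sin_diff)
  thus ?thesis by (simp add: parity_sign_def)
qed

lemma alternating_sum_even_window:
  fixes f :: "int \<Rightarrow> real"
  shows "(\<Sum>k\<in>{-int (2*M)..int (2*M)}. parity_sign k * f k) =
     2 * (\<Sum>j\<in>{-int M..int M}. f (2*j)) - (\<Sum>k\<in>{-int (2*M)..int (2*M)}. f k)"
proof (induction M)
  case 0
  then show ?case by (simp add: parity_sign_def)
next
  case (Suc M)
  have radius: "2 * Suc M = Suc (Suc (2 * M))" by simp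
  have "parity_sign (int (2*M) + 1) = -1" "parity_sign (- int (2*M) - 1) = -1"
       "parity_sign (int (Suc (2*M)) + 1) = 1" "parity_sign (- int (Suc (2*M)) - 1) = 1"
    by (auto simp: parity_sign_def)
  moreover have "2 * (int M + 1) = int (Suc (2*M)) + 1" "2 * (- int M - 1) = - int (Suc (2*M)) - 1"
    by auto
  ultimately show ?case
    unfolding radius sum_symmetric_Suc Suc.IH by (simp add: algebra_simps) (rule arg_cong[where f=f], simp)
qed

lemma cot_half_minus_cot:
  fixes s :: real assumes "sin (pi * s) \<noteq> 0" and "sin (pi * (s/2)) \<noteq> 0"
  shows "pi * cos (pi * (s/2)) / sin (pi * (s/2)) - pi * cos (pi * s) / sin (pi * s) = pi / sin (pi * s)"
proof -
  have "sin (pi * s / 2) = sin (pi * s) * cos (pi * s / 2) - cos (pi * s) * sin (pi * s / 2)"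
    using sin_diff[of "pi * s" "pi * s / 2"] by simp
  thus ?thesis using assms by (simp add: field_simps) algebra
qed

lemma sin_pi_nonint: "s \<notin> \<int> \<Longrightarrow> sin (pi * s) \<noteq> 0"
  by (auto simp: sin_zero_iff_int2 mult.commute[of pi])

text \<open>Partial fractions of the cosecant along windows of even radius: they are the difference
  of a cotangent expansion at s/2 and one at s.\<close>

lemma csc_partial_fractions_even:
  fixes s :: real assumes s: "s \<notin> \<int>"
  shows "(\<lambda>M. \<Sum>k\<in>{-int (2*M)..int (2*M)}. parity_sign k * inverse (s - of_int k)) \<longlonglongrightarrow> pi / sin (pi * s)"
proof -
  have s2: "s / 2 \<notin> \<int>"
  proof
    assume "s / 2 \<in> \<int>" hence "2 * (s/2) \<in> \<int>" by (intro Ints_mult) auto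
    thus False using s by simp
  qed
  have half: "2 * inverse (s - 2 * real_of_int j) = inverse (s/2 - of_int j)" for j :: int
    by (simp add: inverse_eq_divide field_simps)
  have "(\<lambda>M. (\<Sum>j\<in>{-int M..int M}. inverse (s/2 - of_int j)) - (\<Sum>k\<in>{-int (2*M)..int (2*M)}. inverse (s - of_int k)))
     \<longlonglongrightarrow> pi * cos (pi * (s/2)) / sin (pi * (s/2)) - pi * cos (pi * s) / sin (pi * s)"
    using LIMSEQ_subseq_LIMSEQ[OF cot_partial_fractions[OF s], of "\<lambda>M. 2*M"]
    by (intro tendsto_intros cot_partial_fractions[OF s2]) (simp_all add: strict_mono_def o_def)
  thus ?thesis
    unfolding alternating_sum_even_window cot_half_minus_cot[OF sin_pi_nonint[OF s] sin_pi_nonint[OF s2]]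
    by (simp add: sum_distrib_left half)
qed

text \<open>Partial fraction expansion of the cosecant, pi/sin(pi s) = sum_k (-1)^k/(s - k): odd windows
  differ from even ones by two vanishing terms.\<close>

lemma csc_partial_fractions:
  fixes s :: real assumes s: "s \<notin> \<int>"
  shows "(\<lambda>K. \<Sum>k\<in>{-int K..int K}. parity_sign k * inverse (s - of_int k)) \<longlonglongrightarrow> pi / sin (pi * s)"
proof -
  define a where "a K = (\<Sum>k\<in>{-int K..int K}. parity_sign k * inverse (s - of_int k))" for K
  have even: "(\<lambda>M. a (2*M)) \<longlonglongrightarrow> pi / sin (pi * s)"
    unfolding a_def by (rule csc_partial_fractions_even[OF s])
  have "parity_sign (int (2*M) + 1) = -1" "parity_sign (- int (2*M) - 1) = -1" for M
    by (auto simp: parity_sign_def)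
  hence "a (Suc (2*M)) = a (2*M) - (inverse (s - of_int (int (2*M) + 1)) + inverse (s - of_int (- int (2*M) - 1)))" for M
    unfolding a_def sum_symmetric_Suc by simp
  hence odd_step: "a (2*M+1) = a (2*M) - (inverse (s - of_int (int (2*M) + 1)) + inverse (s - of_int (- int (2*M) - 1)))" for M
    by simp
  have "(\<lambda>M. a (2*M) - (inverse (s - of_int (int (2*M) + 1)) + inverse (s - of_int (- int (2*M) - 1))))
       \<longlonglongrightarrow> pi / sin (pi * s) - (0 + 0)"
  proof (intro tendsto_intros even)
    show "(\<lambda>M. inverse (s - real_of_int (int (2 * M) + 1))) \<longlonglongrightarrow> 0" by simp real_asymp
    show "(\<lambda>M. inverse (s - real_of_int (- int (2 * M) - 1))) \<longlonglongrightarrow> 0" by simp real_asymp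
  qed
  hence "(\<lambda>M. a (2*M+1)) \<longlonglongrightarrow> pi / sin (pi * s)" unfolding odd_step by simp
  thus ?thesis using limseq_even_odd[OF even] unfolding a_def by blast
qed

lemma sinc_shift_int:
  assumes s: "s \<notin> \<int>"
  shows "sinc (s - of_int k) = sin (pi * s) / pi * (parity_sign k * inverse (s - of_int k))"
proof -
  have "s - of_int k \<noteq> 0" using s by auto
  thus ?thesis unfolding sinc_def using sin_pi_shift_int[of s k] by (simp add: field_simps)
qed

lemma sinc_shifts_sum_one:
  fixes s :: real assumes s: "s \<notin> \<int>"
  shows "(\<lambda>K. \<Sum>k\<in>{-int K..int K}. sinc (s - of_int k)) \<longlonglongrightarrow> 1"
proof -
  have "(\<lambda>K. sin (pi * s) / pi * (\<Sum>k\<in>{-int K..int K}. parity_sign k * inverse (s - of_int k)))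
      \<longlonglongrightarrow> sin (pi * s) / pi * (pi / sin (pi * s))"
    by (intro tendsto_intros csc_partial_fractions[OF s])
  thus ?thesis using sin_pi_nonint[OF s] by (simp add: sinc_shift_int[OF s] sum_distrib_left)
qed

text \<open>The alternating exponential sum telescopes against cos(pi z) into a single oscillating cosine:
  cos(pi z) sum_{|k|<=K} (-1)^k e(z k) = (-1)^K cos((2K+1) pi z).\<close>

lemma alternating_exp_kernel:
  fixes z :: complex
  shows "cos (of_real pi * z) * (\<Sum>k\<in>{-int K..int K}. of_real (parity_sign k) * exp (2 * of_real pi * \<i> * (z * of_int k)))
       = of_real (parity_sign (int K)) * cos ((2 * of_nat K + 1) * of_real pi * z)"
proof (induction K)
  case 0
  then show ?case by (simp add: parity_sign_def)
next
  case (Suc K)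
  define w where "w = 2 * of_real pi * (z * (of_nat K + 1))"
  have sign: "parity_sign (int K + 1) = - parity_sign (int K)" "parity_sign (- int K - 1) = - parity_sign (int K)"
    "parity_sign (int (Suc K)) = - parity_sign (int K)"
    by (auto simp: parity_sign_def)
  have new_terms: "exp (2 * of_real pi * \<i> * (z * of_int (int K + 1))) + exp (2 * of_real pi * \<i> * (z * of_int (- int K - 1)))
        = 2 * cos w"
    unfolding cos_exp_eq w_def by (simp add: algebra_simps) (rule arg_cong[where f=exp], simp add: algebra_simps)
  have product: "cos (of_real pi * z) * (2 * cos w) =
      cos ((2 * of_nat K + 1) * of_real pi * z) + cos ((2 * of_nat (Suc K) + 1) * of_real pi * z)"
  proof -
    have "cos (of_real pi * z) * (2 * cos w) = 2 * (cos w * cos (of_real pi * z))" by simp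
    also have "\<dots> = cos (w - of_real pi * z) + cos (w + of_real pi * z)" by (simp add: cos_times_cos)
    also have "w - of_real pi * z = (2 * of_nat K + 1) * of_real pi * z" by (simp add: w_def algebra_simps)
    also have "w + of_real pi * z = (2 * of_nat (Suc K) + 1) * of_real pi * z" by (simp add: w_def algebra_simps)
    finally show ?thesis .
  qed
  have "cos (of_real pi * z) * (\<Sum>k\<in>{-int (Suc K)..int (Suc K)}. of_real (parity_sign k) * exp (2 * of_real pi * \<i> * (z * of_int k)))
      = cos (of_real pi * z) * (\<Sum>k\<in>{-int K..int K}. of_real (parity_sign k) * exp (2 * of_real pi * \<i> * (z * of_int k)))
        - of_real (parity_sign (int K)) * (cos (of_real pi * z) * (2 * cos w))"
    unfolding sum_symmetric_Suc sign new_terms[symmetric] by (simp add: algebra_simps)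
  also have "\<dots> = of_real (parity_sign (int (Suc K))) * cos ((2 * of_nat (Suc K) + 1) * of_real pi * z)"
    unfolding Suc.IH product sign by (simp add: algebra_simps)
  finally show ?case .
qed

text \<open>The partial Whittaker sum of e(z t), normalised by e(-z s), as a function of the complex
  frequency z; the goal is to show h(b) - h(0) tends to 0 for real |b| < 1/2.\<close>

definition sinc_exp_sum :: "real \<Rightarrow> nat \<Rightarrow> complex \<Rightarrow> complex" where
  "sinc_exp_sum s K z = (\<Sum>k\<in>{-int K..int K}.
     of_real (sinc (s - of_int k)) * exp (2 * of_real pi * \<i> * (z * (of_int k - of_real s))))"

lemma sinc_exp_sum_0: "sinc_exp_sum s K 0 = of_real (\<Sum>k\<in>{-int K..int K}. sinc (s - of_int k))"
  unfolding sinc_exp_sum_def by simp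

text \<open>Constant of the derivative: sinc(s - k) 2 pi i (k - s) = c(s) (-1)^k.\<close>

definition sinc_deriv_coeff :: "real \<Rightarrow> complex" where
  "sinc_deriv_coeff s = - 2 * \<i> * of_real (sin (pi * s))"

lemma sinc_times_frequency:
  assumes s: "s \<notin> \<int>"
  shows "of_real (sinc (s - of_int k)) * (2 * of_real pi * \<i> * (of_int k - of_real s)) =
    sinc_deriv_coeff s * of_real (parity_sign k)"
proof -
  have "s - of_int k \<noteq> 0" using s by auto
  hence nonzero: "complex_of_real s - of_int k \<noteq> 0"
    by (metis of_real_diff of_real_eq_0_iff of_real_of_int_eq)
  have "sinc (s - of_int k) = sin (pi * s) / pi * (parity_sign k / (s - of_int k))"
    unfolding sinc_shift_int[OF s] by (simp add: inverse_eq_divide)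
  hence "(of_real (sinc (s - of_int k)) :: complex) =
      of_real (sin (pi * s)) / of_real pi * (of_real (parity_sign k) / (of_real s - of_int k))"
    by simp
  thus ?thesis using nonzero by (simp add: sinc_deriv_coeff_def field_simps) algebra
qed

definition kernel_weight :: "real \<Rightarrow> complex \<Rightarrow> complex" where
  "kernel_weight s z = exp (- 2 * of_real pi * \<i> * of_real s * z) / cos (of_real pi * z)"

definition kernel_weight' :: "real \<Rightarrow> complex \<Rightarrow> complex" where
  "kernel_weight' s z = (exp (- 2 * of_real pi * \<i> * of_real s * z) * (- 2 * of_real pi * \<i> * of_real s) * cos (of_real pi * z)
     - exp (- 2 * of_real pi * \<i> * of_real s * z) * (- sin (of_real pi * z) * of_real pi))
     / (cos (of_real pi * z) * cos (of_real pi * z))"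

lemma kernel_weight_deriv:
  assumes "cos (of_real pi * z) \<noteq> 0"
  shows "(kernel_weight s has_field_derivative kernel_weight' s z) (at z)"
  unfolding kernel_weight_def kernel_weight'_def using assms
  by (intro DERIV_divide) (auto intro!: derivative_eq_intros)

lemma sinc_exp_sum_deriv:
  assumes s: "s \<notin> \<int>" and cos_z: "cos (of_real pi * z) \<noteq> 0"
  shows "(sinc_exp_sum s K has_field_derivative
    sinc_deriv_coeff s * of_real (parity_sign (int K)) * kernel_weight s z * cos ((2 * of_nat K + 1) * of_real pi * z)) (at z)"
proof -
  define E where "E k = exp (2 * of_real pi * \<i> * (z * (of_int k - of_real s)))" for k :: int
  have E_split: "E k = exp (- 2 * of_real pi * \<i> * of_real s * z) * exp (2 * of_real pi * \<i> * (z * of_int k))" for k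
    unfolding E_def by (simp add: exp_add[symmetric] algebra_simps)
  have "(sinc_exp_sum s K has_field_derivative
     (\<Sum>k\<in>{-int K..int K}. of_real (sinc (s - of_int k)) * (E k * (2 * of_real pi * \<i> * (of_int k - of_real s))))) (at z)"
    unfolding sinc_exp_sum_def E_def by (intro DERIV_sum DERIV_cmult) (auto intro!: derivative_eq_intros)
  also have "(\<Sum>k\<in>{-int K..int K}. of_real (sinc (s - of_int k)) * (E k * (2 * of_real pi * \<i> * (of_int k - of_real s))))
     = sinc_deriv_coeff s * exp (- 2 * of_real pi * \<i> * of_real s * z) *
       (\<Sum>k\<in>{-int K..int K}. of_real (parity_sign k) * exp (2 * of_real pi * \<i> * (z * of_int k)))"
    unfolding sum_distrib_left
  proof (rule sum.cong[OF refl])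
    fix k
    have "of_real (sinc (s - of_int k)) * (E k * (2 * of_real pi * \<i> * (of_int k - of_real s)))
        = (of_real (sinc (s - of_int k)) * (2 * of_real pi * \<i> * (of_int k - of_real s))) * E k"
      by (simp only: mult_ac)
    also have "\<dots> = sinc_deriv_coeff s * of_real (parity_sign k) *
        (exp (- 2 * of_real pi * \<i> * of_real s * z) * exp (2 * of_real pi * \<i> * (z * of_int k)))"
      by (simp only: sinc_times_frequency[OF s] E_split)
    finally show "of_real (sinc (s - of_int k)) * (E k * (2 * of_real pi * \<i> * (of_int k - of_real s))) =
        sinc_deriv_coeff s * exp (- 2 * of_real pi * \<i> * of_real s * z) *
        (of_real (parity_sign k) * exp (2 * of_real pi * \<i> * (z * of_int k)))"
      by (simp only: mult_ac)
  qed
  also have "\<dots> = sinc_deriv_coeff s * of_real (parity_sign (int K)) * kernel_weight s z * cos ((2 * of_nat K + 1) * of_real pi * z)"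
    using alternating_exp_kernel[of z K] cos_z unfolding kernel_weight_def
    by (simp add: field_simps)
  finally show ?thesis .
qed

text \<open>Subtracting the boundary term of an integration by parts leaves a function whose
  derivative carries the factor 1/((2K+1) pi).\<close>

definition sinc_exp_sum_corrected :: "real \<Rightarrow> nat \<Rightarrow> complex \<Rightarrow> complex" where
  "sinc_exp_sum_corrected s K z = sinc_exp_sum s K z
     - sinc_deriv_coeff s * of_real (parity_sign (int K)) * (kernel_weight s z * sin ((2 * of_nat K + 1) * of_real pi * z))
       / ((2 * of_nat K + 1) * of_real pi)"

lemma odd_multiple_pi_nonzero: "(2 * of_nat K + 1) * of_real pi \<noteq> (0 :: complex)"
proof -
  have "(2 * of_nat K + 1) * of_real pi = (of_real ((2 * real K + 1) * pi) :: complex)" by simp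
  moreover have "(2 * real K + 1) * pi \<noteq> 0" by (simp add: add_nonneg_eq_0_iff)
  ultimately show ?thesis by (metis of_real_eq_0_iff)
qed

lemma sinc_exp_sum_corrected_deriv:
  assumes s: "s \<notin> \<int>" and cos_z: "cos (of_real pi * z) \<noteq> 0"
  shows "(sinc_exp_sum_corrected s K has_field_derivative
      - sinc_deriv_coeff s * of_real (parity_sign (int K)) * kernel_weight' s z * sin ((2 * of_nat K + 1) * of_real pi * z)
        / ((2 * of_nat K + 1) * of_real pi)) (at z)"
proof -
  define M :: complex where "M = (2 * of_nat K + 1) * of_real pi"
  define c where "c = sinc_deriv_coeff s * of_real (parity_sign (int K))"
  have sin_deriv: "((\<lambda>z. sin (M * z)) has_field_derivative cos (M * z) * M) (at z)"
    by (auto intro!: derivative_eq_intros)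
  have sum_deriv: "(sinc_exp_sum s K has_field_derivative c * kernel_weight s z * cos (M * z)) (at z)"
    using sinc_exp_sum_deriv[OF s cos_z, of K] unfolding M_def c_def .
  have "(sinc_exp_sum_corrected s K has_field_derivative c * kernel_weight s z * cos (M * z) -
      c * (kernel_weight' s z * sin (M * z) + cos (M * z) * M * kernel_weight s z) / M) (at z)"
    unfolding sinc_exp_sum_corrected_def c_def[symmetric] M_def[symmetric]
    by (intro DERIV_diff DERIV_cdivide DERIV_cmult DERIV_mult sum_deriv kernel_weight_deriv[OF cos_z] sin_deriv)
  moreover have "c * kernel_weight s z * cos (M * z) -
      c * (kernel_weight' s z * sin (M * z) + cos (M * z) * M * kernel_weight s z) / M
      = - c * kernel_weight' s z * sin (M * z) / M"
    using odd_multiple_pi_nonzero[of K] by (simp add: M_def field_simps)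
  ultimately show ?thesis unfolding M_def c_def by simp
qed

lemma norm_oscillating_term:
  fixes c w :: complex
  shows "norm (c * of_real (parity_sign j) * w * sin ((2 * of_nat K + 1) * of_real pi * of_real x)
      / ((2 * of_nat K + 1) * of_real pi)) \<le> norm c * norm w / ((2 * real K + 1) * pi)"
proof -
  have real_arg: "(2 * of_nat K + 1) * of_real pi * of_real x = (of_real ((2 * real K + 1) * pi * x) :: complex)"
    "(2 * of_nat K + 1) * of_real pi = (of_real ((2 * real K + 1) * pi) :: complex)"
    by simp_all
  have "norm (2 * of_nat K + 1 :: complex) = norm (of_real (2 * real K + 1) :: complex)" by simp
  hence norm_odd: "norm (2 * of_nat K + 1 :: complex) = 2 * real K + 1" by (simp only: norm_of_real)
  have "norm (c * of_real (parity_sign j) * w * sin ((2 * of_nat K + 1) * of_real pi * of_real x)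
      / ((2 * of_nat K + 1) * of_real pi))
      = norm c * norm w * \<bar>sin ((2 * real K + 1) * pi * x)\<bar> / ((2 * real K + 1) * pi)"
    unfolding real_arg(1) sin_of_real by (simp add: norm_mult norm_divide norm_odd)
  also have "\<dots> \<le> norm c * norm w * 1 / ((2 * real K + 1) * pi)"
    by (intro divide_right_mono mult_left_mono abs_sin_le_one) auto
  finally show ?thesis by simp
qed

lemma closed_segment_0_of_real:
  assumes "z \<in> closed_segment 0 (complex_of_real b)"
  obtains x where "z = of_real x" and "\<bar>x\<bar> \<le> \<bar>b\<bar>"
proof -
  obtain u where u: "0 \<le> u" "u \<le> 1" "z = u *\<^sub>R of_real b" using assms by (auto simp: in_segment)
  have "\<bar>u * b\<bar> \<le> \<bar>b\<bar>" using u by (simp add: abs_mult mult_left_le_one_le)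
  moreover have "z = of_real (u * b)" using u by (simp add: scaleR_conv_of_real)
  ultimately show ?thesis using that by blast
qed

lemma cos_pi_segment_nonzero:
  assumes b: "\<bar>b\<bar> < 1/2" and z: "z \<in> closed_segment 0 (complex_of_real b)"
  shows "cos (of_real pi * z) \<noteq> 0"
proof -
  obtain x where x: "z = of_real x" "\<bar>x\<bar> \<le> \<bar>b\<bar>" using z by (rule closed_segment_0_of_real)
  have "pi * (-1/2) < pi * x" "pi * x < pi * (1/2)"
    using x(2) b by (intro mult_strict_left_mono; simp)+
  hence "0 < cos (pi * x)" by (intro cos_gt_zero_pi) auto
  moreover have "cos (of_real pi * z) = of_real (cos (pi * x))"
    unfolding x(1) by (simp flip: cos_of_real)
  ultimately show ?thesis by simp
qed

text \<open>Integration by parts, quantitatively: given a bound B for the derivative of the weight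
  on [0,b], the mean value inequality for the corrected sum plus the size of the boundary term
  give h_K(b) - h_K(0) = O(1/(2K+1)).\<close>

lemma sinc_exp_sum_increment_le:
  assumes s: "s \<notin> \<int>" and b: "\<bar>b\<bar> < 1/2"
    and B: "\<And>z. z \<in> closed_segment 0 (complex_of_real b) \<Longrightarrow> norm (kernel_weight' s z) \<le> B"
  shows "norm (sinc_exp_sum s K (of_real b) - sinc_exp_sum s K 0)
    \<le> norm (sinc_deriv_coeff s) * (B * \<bar>b\<bar> + norm (kernel_weight s (of_real b))) / pi / (2 * real K + 1)"
proof -
  define S where "S = closed_segment 0 (complex_of_real b)"
  define c where "c = sinc_deriv_coeff s"
  define D where "D z = - c * of_real (parity_sign (int K)) * kernel_weight' s z *
    sin ((2 * of_nat K + 1) * of_real pi * z) / ((2 * of_nat K + 1) * of_real pi)" for z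
  have S: "convex S" "complex_of_real b \<in> S" "0 \<in> S" unfolding S_def by auto
  have deriv: "(sinc_exp_sum_corrected s K has_field_derivative D z) (at z within S)" if z_in: "z \<in> S" for z
    unfolding D_def c_def using sinc_exp_sum_corrected_deriv[OF s cos_pi_segment_nonzero[OF b z_in[unfolded S_def]]]
    by (rule has_field_derivative_at_within)
  have D_bound: "norm (D z) \<le> norm c * B / ((2 * real K + 1) * pi)" if z_in: "z \<in> S" for z
  proof -
    obtain x where x: "z = of_real x" by (rule closed_segment_0_of_real[OF z_in[unfolded S_def]])
    have "norm (D z) \<le> norm (- c) * norm (kernel_weight' s z) / ((2 * real K + 1) * pi)"
      unfolding D_def x by (rule norm_oscillating_term)
    also have "\<dots> \<le> norm c * B / ((2 * real K + 1) * pi)"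
      using B[OF z_in[unfolded S_def]] by (simp add: divide_right_mono mult_left_mono)
    finally show ?thesis .
  qed
  have mvt: "norm (sinc_exp_sum_corrected s K (of_real b) - sinc_exp_sum_corrected s K 0)
      \<le> norm c * B / ((2 * real K + 1) * pi) * \<bar>b\<bar>"
    using field_differentiable_bound[OF S(1) deriv D_bound S(2,3)] by simp
  have boundary: "norm (c * of_real (parity_sign (int K)) * (kernel_weight s (of_real b) *
      sin ((2 * of_nat K + 1) * of_real pi * of_real b)) / ((2 * of_nat K + 1) * of_real pi))
      \<le> norm c * norm (kernel_weight s (of_real b)) / ((2 * real K + 1) * pi)"
    using norm_oscillating_term[of c "int K" "kernel_weight s (of_real b)" K b] by (simp only: mult.assoc)
  have "norm (sinc_exp_sum s K (of_real b) - sinc_exp_sum s K 0)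
      \<le> norm c * B / ((2 * real K + 1) * pi) * \<bar>b\<bar>
        + norm c * norm (kernel_weight s (of_real b)) / ((2 * real K + 1) * pi)"
    using order.trans[OF norm_triangle_ineq add_mono[OF mvt boundary]]
    unfolding sinc_exp_sum_corrected_def c_def by simp
  also have "\<dots> = norm c * (B * \<bar>b\<bar> + norm (kernel_weight s (of_real b))) / pi / (2 * real K + 1)"
    by (simp add: add_divide_distrib ring_distribs divide_divide_eq_left mult_ac)
  finally show ?thesis unfolding c_def .
qed

text \<open>The derivative of the weight is continuous, hence bounded, on the compact segment [0,b].\<close>

lemma kernel_weight'_bounded:
  assumes b: "\<bar>b\<bar> < 1/2"
  obtains B where "\<And>z. z \<in> closed_segment 0 (complex_of_real b) \<Longrightarrow> norm (kernel_weight' s z) \<le> B"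
proof -
  have "continuous_on (closed_segment 0 (complex_of_real b)) (kernel_weight' s)"
    unfolding kernel_weight'_def using cos_pi_segment_nonzero[OF b] by (intro continuous_intros) auto
  hence "bounded (kernel_weight' s ` closed_segment 0 (complex_of_real b))"
    by (intro compact_imp_bounded compact_continuous_image) auto
  thus ?thesis using that unfolding bounded_iff by blast
qed

lemma sinc_exp_sum_increment_vanishes:
  assumes s: "s \<notin> \<int>" and b: "\<bar>b\<bar> < 1/2"
  shows "(\<lambda>K. sinc_exp_sum s K (of_real b) - sinc_exp_sum s K 0) \<longlonglongrightarrow> 0"
proof -
  obtain B where B: "\<And>z. z \<in> closed_segment 0 (complex_of_real b) \<Longrightarrow> norm (kernel_weight' s z) \<le> B"
    using kernel_weight'_bounded[OF b] by blast
  define C where "C = norm (sinc_deriv_coeff s) * (B * \<bar>b\<bar> + norm (kernel_weight s (of_real b))) / pi"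
  show ?thesis
  proof (rule Lim_null_comparison)
    show "\<forall>\<^sub>F K in sequentially. norm (sinc_exp_sum s K (of_real b) - sinc_exp_sum s K 0) \<le> C / (2 * real K + 1)"
      using sinc_exp_sum_increment_le[OF s b B] unfolding C_def by simp
    show "(\<lambda>K. C / (2 * real K + 1)) \<longlonglongrightarrow> 0" by real_asymp
  qed
qed

text \<open>Whittaker series of e(b t) at a non-integer point: multiply the limit h_K(b) -> 1 by e(b s).\<close>

lemma whittaker_series_nonint:
  assumes s: "s \<notin> \<int>" and b: "\<bar>b\<bar> < 1/2"
  shows "(\<lambda>K. \<Sum>k\<in>{-int K..int K}. wave (b * of_int k) * of_real (sinc (s - of_int k))) \<longlonglongrightarrow> wave (b * s)"
proof -
  have "(\<lambda>K. sinc_exp_sum s K 0) \<longlonglongrightarrow> 1"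
    unfolding sinc_exp_sum_0 using tendsto_of_real[OF sinc_shifts_sum_one[OF s], where 'a=complex] by simp
  hence "(\<lambda>K. (sinc_exp_sum s K (of_real b) - sinc_exp_sum s K 0) + sinc_exp_sum s K 0) \<longlonglongrightarrow> 0 + 1"
    by (intro tendsto_intros sinc_exp_sum_increment_vanishes[OF s b])
  hence "(\<lambda>K. wave (b * s) * sinc_exp_sum s K (of_real b)) \<longlonglongrightarrow> wave (b * s) * 1"
    by (intro tendsto_intros) simp
  moreover have "wave (b * s) * sinc_exp_sum s K (of_real b) =
     (\<Sum>k\<in>{-int K..int K}. wave (b * of_int k) * of_real (sinc (s - of_int k)))" for K
  proof -
    have shifted_term: "wave (b * s) * (of_real (sinc (s - of_int k)) * wave (b * (of_int k - s))) =
        wave (b * of_int k) * of_real (sinc (s - of_int k))" for k :: int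
    proof -
      have "wave (b * of_int k) = wave (b * s) * wave (b * (of_int k - s))"
        by (simp flip: wave_add add: algebra_simps)
      thus ?thesis by (simp add: mult_ac)
    qed
    have "sinc_exp_sum s K (of_real b) =
        (\<Sum>k\<in>{-int K..int K}. of_real (sinc (s - of_int k)) * wave (b * (of_int k - s)))"
      unfolding sinc_exp_sum_def wave_def by simp
    thus ?thesis by (simp add: sum_distrib_left shifted_term)
  qed
  ultimately show ?thesis by simp
qed

text \<open>At an integer point the series is a single sample, since sinc vanishes at nonzero integers.\<close>

lemma whittaker_series_int:
  fixes m :: int
  shows "(\<lambda>K. \<Sum>k\<in>{-int K..int K}. wave (b * of_int k) * of_real (sinc (of_int m - of_int k))) \<longlonglongrightarrow> wave (b * of_int m)"
proof (rule tendsto_eventually)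
  have sample: "wave (b * of_int k) * of_real (sinc (of_int m - of_int k)) = (if k = m then wave (b * of_int m) else 0)" for k
  proof (cases "k = m")
    case False
    have "sin (pi * of_int (m - k)) = 0" by (rule sin_npi_int)
    thus ?thesis using False by (simp add: sinc_def)
  qed (simp add: sinc_def)
  show "\<forall>\<^sub>F K in sequentially. (\<Sum>k\<in>{-int K..int K}. wave (b * of_int k) * of_real (sinc (of_int m - of_int k)))
          = wave (b * of_int m)"
    using eventually_ge_at_top[of "nat \<bar>m\<bar>"] by eventually_elim (auto simp: sample sum.delta')
qed

lemma whittaker_series:
  assumes b: "\<bar>b\<bar> < 1/2"
  shows "(\<lambda>K. \<Sum>k\<in>{-int K..int K}. wave (b * of_int k) * of_real (sinc (s - of_int k))) \<longlonglongrightarrow> wave (b * s)"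
proof (cases "s \<in> \<int>")
  case True
  then obtain m where "s = of_int m" by (auto elim: Ints_cases)
  thus ?thesis using whittaker_series_int[of b m] by simp
qed (use whittaker_series_nonint b in auto)

text \<open>sinc decays like 1/t, so single terms of the series vanish at infinity.\<close>

lemma sinc_at_top: "(sinc \<longlongrightarrow> 0) at_top"
proof (rule Lim_null_comparison)
  show "\<forall>\<^sub>F y in at_top. norm (sinc y) \<le> 1 / (pi * y)"
    using eventually_gt_at_top[of 0]
  proof eventually_elim
    case (elim y)
    have "norm (sinc y) = \<bar>sin (pi * y)\<bar> / (pi * y)" using elim by (simp add: sinc_def abs_mult)
    also have "\<dots> \<le> 1 / (pi * y)" using elim by (intro divide_right_mono abs_sin_le_one) auto
    finally show ?case .
  qed
  show "((\<lambda>y. 1 / (pi * y)) \<longlongrightarrow> 0) at_top" by real_asymp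
qed

lemma rho_cyl: "rho (cyl p) = p - of_int \<lfloor>p\<rfloor>"
  unfolding rho_def
proof (rule the_equality)
  show "p - of_int \<lfloor>p\<rfloor> \<in> cyl p \<and> 0 \<le> p - of_int \<lfloor>p\<rfloor> \<and> p - of_int \<lfloor>p\<rfloor> < 1"
    unfolding cyl_def by (auto intro: Ints_minus) linarith
next
  fix r assume r: "r \<in> cyl p \<and> 0 \<le> r \<and> r < 1"
  then obtain j where j: "r - p = of_int j" unfolding cyl_def by (auto elim: Ints_cases)
  have "of_int (- j) \<le> p" "p < of_int (- j) + 1" using j r by linarith+
  hence "j = - \<lfloor>p\<rfloor>" by (metis floor_unique minus_minus)
  thus "r = p - of_int \<lfloor>p\<rfloor>" using j by simp
qed

lemma cyl_shift_int:
  assumes "q - p \<in> \<int>" shows "cyl p = cyl q"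
proof -
  have "\<tau> - p \<in> \<int> \<longleftrightarrow> \<tau> - q \<in> \<int>" for \<tau>
  proof
    assume "\<tau> - p \<in> \<int>"
    from Ints_diff[OF this assms] show "\<tau> - q \<in> \<int>" by simp
  next
    assume "\<tau> - q \<in> \<int>"
    from Ints_add[OF this assms] show "\<tau> - p \<in> \<int>" by simp
  qed
  thus ?thesis unfolding cyl_def by blast
qed

definition window :: "real \<Rightarrow> real \<Rightarrow> int set" where
  "window r N = {k. -N \<le> r + of_int k \<and> r + of_int k \<le> N}"

lemma window_eq: "window r N = {\<lceil>-N - r\<rceil>..\<lfloor>N - r\<rfloor>}"
  unfolding window_def by (auto simp: ceiling_le_iff le_floor_iff)

lemma cyl_partial_sum_window:
  "(\<Sum>\<tau>\<in>cyl r \<inter> {-N..N}. f \<tau>) = (\<Sum>k\<in>window r N. f (r + of_int k))"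
proof -
  have "cyl r \<inter> {-N..N} = (\<lambda>k. r + of_int k) ` window r N"
  proof
    show "cyl r \<inter> {-N..N} \<subseteq> (\<lambda>k. r + of_int k) ` window r N"
    proof
      fix \<tau> assume "\<tau> \<in> cyl r \<inter> {-N..N}"
      then obtain k where "\<tau> - r = of_int k" "-N \<le> \<tau>" "\<tau> \<le> N" unfolding cyl_def by (auto elim: Ints_cases)
      thus "\<tau> \<in> (\<lambda>k. r + of_int k) ` window r N" unfolding window_def by (intro image_eqI[of _ _ k]) auto
    qed
  qed (auto simp: cyl_def window_def)
  moreover have "inj_on (\<lambda>k::int. r + of_int k) A" for A by (rule inj_onI) simp
  ultimately show ?thesis by (simp add: sum.reindex)
qed

lemma window_symmetric_part:
  assumes "0 \<le> r" "r < 1" "L = \<lfloor>N - r\<rfloor>"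
  shows "{-L..L} \<subseteq> window r N" and "window r N - {-L..L} \<subseteq> {-L-2, -L-1}"
  using assms unfolding window_eq by (auto simp: ceiling_le_iff le_floor_iff) linarith+

lemma filterlim_nat_floor_shift: "filterlim (\<lambda>N::real. nat \<lfloor>N - r\<rfloor>) at_top at_top"
  by (rule filterlim_compose[OF filterlim_nat_sequentially filterlim_compose[OF filterlim_floor_sequentially]])
     real_asymp

lemma window_excess_vanishes:
  fixes g :: "int \<Rightarrow> 'a::real_normed_vector"
  assumes r: "0 \<le> r" "r < 1"
    and g1: "(\<lambda>L. g (- int L - 1)) \<longlonglongrightarrow> 0" and g2: "(\<lambda>L. g (- int L - 2)) \<longlonglongrightarrow> 0"
  shows "((\<lambda>N. \<Sum>k\<in>window r N - {-int (nat \<lfloor>N - r\<rfloor>)..int (nat \<lfloor>N - r\<rfloor>)}. g k) \<longlongrightarrow> 0) at_top"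
proof (rule Lim_null_comparison)
  define K where "K N = nat \<lfloor>N - r\<rfloor>" for N :: real
  show "\<forall>\<^sub>F N in at_top. norm (\<Sum>k\<in>window r N - {-int (K N)..int (K N)}. g k)
      \<le> norm (g (- int (K N) - 2)) + norm (g (- int (K N) - 1))"
    using eventually_ge_at_top[of 1]
  proof eventually_elim
    case (elim N)
    define L where "L = int (K N)"
    have "L = \<lfloor>N - r\<rfloor>" using elim r unfolding L_def K_def by simp
    hence excess: "window r N - {-L..L} \<subseteq> {-L-2, -L-1}" using window_symmetric_part(2)[OF r] by blast
    have "norm (\<Sum>k\<in>window r N - {-L..L}. g k) \<le> (\<Sum>k\<in>window r N - {-L..L}. norm (g k))"
      by (rule norm_sum)
    also have "\<dots> \<le> (\<Sum>k\<in>{-L-2, -L-1}. norm (g k))"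
      by (rule sum_mono2[OF _ excess]) auto
    finally show ?case unfolding L_def by simp
  qed
  have "filterlim K at_top at_top" unfolding K_def by (rule filterlim_nat_floor_shift)
  hence "((\<lambda>N. norm (g (- int (K N) - 2)) + norm (g (- int (K N) - 1))) \<longlongrightarrow> 0 + 0) at_top"
    by (intro tendsto_add tendsto_norm_zero filterlim_compose[OF g2] filterlim_compose[OF g1])
  thus "((\<lambda>N. norm (g (- int (K N) - 2)) + norm (g (- int (K N) - 1))) \<longlongrightarrow> 0) at_top" by simp
qed

text \<open>Limit of the truncated cylinder sums of e(a t), a = b + n, over the coset r + Z: the
  samples factor as e(a r) times the terms of the Whittaker series of e(b t) at s = t - r.\<close>

lemma cylinder_window_limit:
  assumes ab: "a = b + of_int n" and b: "\<bar>b\<bar> < 1/2" and r: "0 \<le> r" "r < 1"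
  shows "((\<lambda>N. \<Sum>k\<in>window r N. wave (a * (r + of_int k)) * of_real (sinc (t - (r + of_int k))))
          \<longlongrightarrow> wave (b * t + of_int n * r)) at_top"
proof -
  define s where "s = t - r"
  define g where "g k = wave (b * of_int k) * of_real (sinc (s - of_int k))" for k :: int
  define K where "K N = nat \<lfloor>N - r\<rfloor>" for N :: real
  have sample: "wave (a * (r + of_int k)) * of_real (sinc (t - (r + of_int k))) = wave (a * r) * g k" for k
  proof -
    have "a * (r + of_int k) = (a * r + b * of_int k) + of_int (n * k)" unfolding ab by (simp add: algebra_simps)
    hence "wave (a * (r + of_int k)) = wave (a * r) * wave (b * of_int k)" by (simp only: wave_add wave_int) simp
    thus ?thesis unfolding g_def s_def by (simp add: algebra_simps)
  qed
  have split: "(\<Sum>k\<in>window r N. g k) = (\<Sum>k\<in>{-int (K N)..int (K N)}. g k)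
      + (\<Sum>k\<in>window r N - {-int (K N)..int (K N)}. g k)" if "N \<ge> 1" for N
  proof -
    have "int (K N) = \<lfloor>N - r\<rfloor>" using that r unfolding K_def by simp
    hence "{-int (K N)..int (K N)} \<subseteq> window r N" using window_symmetric_part(1)[OF r] by blast
    moreover have "finite (window r N)" by (simp add: window_eq)
    ultimately show ?thesis by (simp add: sum.subset_diff add.commute)
  qed
  have tail: "(\<lambda>L. g (- int L - j)) \<longlonglongrightarrow> 0" for j :: int
  proof -
    have "(\<lambda>L. sinc (s + real L + of_int j)) \<longlonglongrightarrow> 0"
      by (rule filterlim_compose[OF sinc_at_top]) real_asymp
    hence "(\<lambda>L. norm (g (- int L - j))) \<longlonglongrightarrow> 0"
      unfolding g_def by (simp add: norm_mult norm_wave tendsto_rabs_zero_iff algebra_simps)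
    thus ?thesis by (simp only: tendsto_norm_zero_iff)
  qed
  have "((\<lambda>N. (\<Sum>k\<in>{-int (K N)..int (K N)}. g k) + (\<Sum>k\<in>window r N - {-int (K N)..int (K N)}. g k))
      \<longlongrightarrow> wave (b * s) + 0) at_top"
    unfolding K_def
    by (intro tendsto_add filterlim_compose[OF whittaker_series[OF b, of s, folded g_def]]
        filterlim_nat_floor_shift window_excess_vanishes[OF r tail[of 1] tail[of 2]])
  hence "((\<lambda>N. (\<Sum>k\<in>{-int (K N)..int (K N)}. g k) + (\<Sum>k\<in>window r N - {-int (K N)..int (K N)}. g k))
      \<longlongrightarrow> wave (b * s)) at_top" by simp
  hence "((\<lambda>N. \<Sum>k\<in>window r N. g k) \<longlongrightarrow> wave (b * s)) at_top"
    by (rule Lim_transform_eventually) (use eventually_ge_at_top[of 1] in \<open>eventually_elim, simp add: split\<close>)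
  hence "((\<lambda>N. wave (a * r) * (\<Sum>k\<in>window r N. g k)) \<longlongrightarrow> wave (a * r) * wave (b * s)) at_top"
    by (rule tendsto_mult_left)
  moreover have "wave (a * r) * wave (b * s) = wave (b * t + of_int n * r)"
    unfolding s_def ab by (simp flip: wave_add add: algebra_simps)
  ultimately show ?thesis by (simp add: sample sum_distrib_left)
qed

lemma whittaker_partial_cyl_limit:
  assumes ab: "a = b + of_int n" and b: "\<bar>b\<bar> < 1/2"
  shows "(whittaker_partial (\<lambda>t. wave (a * t)) t (cyl p) \<longlongrightarrow> wave (b * t + of_int n * rho (cyl p))) at_top"
proof -
  define r where "r = rho (cyl p)"
  have r: "0 \<le> r" "r < 1" unfolding r_def rho_cyl by linarith+
  have "r - p \<in> \<int>" unfolding r_def rho_cyl by simp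
  hence "cyl p = cyl r" by (rule cyl_shift_int)
  hence "whittaker_partial (\<lambda>t. wave (a * t)) t (cyl p) =
      (\<lambda>N. \<Sum>k\<in>window r N. wave (a * (r + of_int k)) * of_real (sinc (t - (r + of_int k))))"
    unfolding whittaker_partial_def by (simp add: cyl_partial_sum_window)
  thus ?thesis using cylinder_window_limit[OF ab b r] unfolding r_def by simp
qed

theorem mainTheorem3:
  fixes a b :: real and n :: int
  assumes "a = b + of_int n" and "-1/2 < b" and "b < 1/2"
  defines "x \<equiv> (\<lambda>t::real. exp (2 * complex_of_real pi * \<i> * complex_of_real (a * t)))"
  shows "(\<forall>t::real. \<forall>\<phi>\<in>torus.
            (whittaker_partial x t \<phi> \<longlongrightarrow>
               exp (2 * complex_of_real pi * \<i> * complex_of_real (b * t + of_int n * rho \<phi>))) at_top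
          \<and> whittaker x t \<phi> =
               exp (2 * complex_of_real pi * \<i> * complex_of_real (b * t + of_int n * rho \<phi>)))
       \<and> (\<forall>v \<alpha> t::real. whittaker x (v * t) (cyl (\<alpha> * t)) =
               exp (2 * complex_of_real pi * \<i> * complex_of_real ((b * v + of_int n * \<alpha>) * t)))"
proof -
  have b: "\<bar>b\<bar> < 1/2" using assms(2,3) by auto
  have x: "x = (\<lambda>t. wave (a * t))" unfolding x_def wave_def ..
  have limit: "(whittaker_partial x t \<phi> \<longlongrightarrow> wave (b * t + of_int n * rho \<phi>)) at_top" if "\<phi> \<in> torus" for t \<phi>
    using that whittaker_partial_cyl_limit[OF assms(1) b] unfolding torus_def x by blast
  have whittaker_value: "whittaker x t \<phi> = wave (b * t + of_int n * rho \<phi>)" if "\<phi> \<in> torus" for t \<phi>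
    unfolding whittaker_def using limit[OF that] by (rule tendsto_Lim[rotated]) simp
  have sampled: "whittaker x (v * t) (cyl (\<alpha> * t)) = wave ((b * v + of_int n * \<alpha>) * t)" for v \<alpha> t
  proof -
    have "whittaker x (v * t) (cyl (\<alpha> * t)) = wave (b * (v * t) + of_int n * rho (cyl (\<alpha> * t)))"
      by (rule whittaker_value) (simp add: torus_def)
    also have "b * (v * t) + of_int n * rho (cyl (\<alpha> * t)) = (b * v + of_int n * \<alpha>) * t + of_int (- n * \<lfloor>\<alpha> * t\<rfloor>)"
      by (simp add: rho_cyl algebra_simps)
    finally show ?thesis by (simp only: wave_add wave_int mult_1_right)
  qed
  show ?thesis using limit whittaker_value sampled unfolding wave_def by blast
qed

end
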